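(* Let $\mathcal S=(\mathcal P,\mathcal L)$ be a linear space with $v$ points and constant line size $k$, $2<k<v$, and $b$ lines; let $G\le\mathrm{Aut}(\mathcal S)$ be transitive on lines, and let $\mathfrak C$ be a non-trivial $G$-invariant partition of $\mathcal P$ with $d$ classes of size $c$. If the permutation group $G^{\mathfrak C}$ induced by $G$ on $\mathfrak C$ is $t$-transitive, then $t\le t_{\max}$.
   Context: A linear space: a finite set $\mathcal P$ of points and a set $\mathcal L$ of subsets (lines) such that any two distinct points lie on exactly one line and each line has at least two points. For a line $\lambda$ and $0\le i\le k$, $d_i$ is the number of classes $C\in\mathfrak C$ with $|C\cap\lambda|=i$ (independent of $\lambda$); $\mathrm{spec}\,\mathcal S=\{i>0:d_i\ne0\}$. For a non-empty $S\subseteq\mathrm{spec}\,\mathcal S$ put $d(S)=\sum_{i\in S}d_i$. Define $t_{\max}$ to be the largest positive integer $t\le d$ such that for all non-empty $S\subseteq\mathrm{spec}\,\mathcal S$ and all positive integers $h\le\min\{t,d(S)\}$, the number $\prod_{j=0}^{h-1}(d-j)$ divides $b\prod_{j=0}^{h-1}(d(S)-j)$. *)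

theory Defs
  imports "HOL-Combinatorics.Permutations"
begin

definition linear_space :: "'a set \<Rightarrow> 'a set set \<Rightarrow> bool" where
  "linear_space P L \<longleftrightarrow> finite P \<and> (\<forall>l\<in>L. l \<subseteq> P \<and> 2 \<le> card l) \<and>
     (\<forall>x\<in>P. \<forall>y\<in>P. x \<noteq> y \<longrightarrow> (\<exists>!l. l \<in> L \<and> x \<in> l \<and> y \<in> l))"

definition perm_group_on :: "'a set \<Rightarrow> ('a \<Rightarrow> 'a) set \<Rightarrow> bool" where
  "perm_group_on P G \<longleftrightarrow> id \<in> G \<and> (\<forall>g\<in>G. g permutes P) \<and>
     (\<forall>g\<in>G. \<forall>h\<in>G. g \<circ> h \<in> G) \<and> (\<forall>g\<in>G. inv g \<in> G)"

definition aut_group :: "'a set \<Rightarrow> 'a set set \<Rightarrow> ('a \<Rightarrow> 'a) set \<Rightarrow> bool" where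
  "aut_group P L G \<longleftrightarrow> perm_group_on P G \<and> (\<forall>g\<in>G. (\<lambda>l. g ` l) ` L = L)"

definition line_transitive :: "'a set set \<Rightarrow> ('a \<Rightarrow> 'a) set \<Rightarrow> bool" where
  "line_transitive L G \<longleftrightarrow> (\<forall>l\<in>L. \<forall>m\<in>L. \<exists>g\<in>G. g ` l = m)"

definition partition_of :: "'a set \<Rightarrow> 'a set set \<Rightarrow> bool" where
  "partition_of P \<C> \<longleftrightarrow> \<Union>\<C> = P \<and> {} \<notin> \<C> \<and>
     (\<forall>C\<in>\<C>. \<forall>D\<in>\<C>. C \<noteq> D \<longrightarrow> C \<inter> D = {})"

definition G_invariant :: "('a \<Rightarrow> 'a) set \<Rightarrow> 'a set set \<Rightarrow> bool" where
  "G_invariant G \<C> \<longleftrightarrow> (\<forall>g\<in>G. \<forall>C\<in>\<C>. g ` C \<in> \<C>)"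

definition induced_t_transitive :: "('a \<Rightarrow> 'a) set \<Rightarrow> 'a set set \<Rightarrow> nat \<Rightarrow> bool" where
  "induced_t_transitive G \<C> t \<longleftrightarrow> t \<le> card \<C> \<and>
     (\<forall>xs ys. set xs \<subseteq> \<C> \<and> set ys \<subseteq> \<C> \<and> distinct xs \<and> distinct ys \<and>
        length xs = t \<and> length ys = t \<longrightarrow> (\<exists>g\<in>G. map (\<lambda>C. g ` C) xs = ys))"

definition dnum :: "'a set set \<Rightarrow> 'a set \<Rightarrow> nat \<Rightarrow> nat" where
  "dnum \<C> l i = card {C \<in> \<C>. card (C \<inter> l) = i}"

definition spec :: "'a set set \<Rightarrow> 'a set \<Rightarrow> nat set" where
  "spec \<C> l = {i. 0 < i \<and> dnum \<C> l i \<noteq> 0}"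

definition dS :: "'a set set \<Rightarrow> 'a set \<Rightarrow> nat set \<Rightarrow> nat" where
  "dS \<C> l S = (\<Sum>i\<in>S. dnum \<C> l i)"

definition tmax :: "'a set set \<Rightarrow> 'a set \<Rightarrow> nat \<Rightarrow> nat \<Rightarrow> nat" where
  "tmax \<C> l d b = (GREATEST t. 0 < t \<and> t \<le> d \<and>
     (\<forall>S. S \<subseteq> spec \<C> l \<and> S \<noteq> {} \<longrightarrow>
        (\<forall>h. 0 < h \<and> h \<le> min t (dS \<C> l S) \<longrightarrow>
          (\<Prod>j<h. d - j) dvd b * (\<Prod>j<h. dS \<C> l S - j))))"

end

theory Submission
  imports Defs
begin

text \<open>
  Fix a non-empty set \<open>S\<close> of intersection sizes and \<open>h \<le> t\<close>, and double count the pairs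
  \<open>(m, (C\<^sub>1, \<dots>, C\<^sub>h))\<close> of a line \<open>m\<close> and distinct classes with every \<open>card (C\<^sub>i \<inter> m) \<in> S\<close>.
  By line-transitivity every line meets exactly \<open>d(S)\<close> classes in a size from \<open>S\<close>, so each
  line lies in \<open>d(S) (d(S) - 1) \<cdots> (d(S) - h + 1)\<close> pairs; by \<open>h\<close>-transitivity on the classes
  every one of the \<open>d (d - 1) \<cdots> (d - h + 1)\<close> tuples lies in the same number \<open>N\<close> of pairs.
  Hence \<open>b \<cdot> d(S) \<cdots> (d(S) - h + 1) = N \<cdot> d \<cdots> (d - h + 1)\<close>, which is the divisibility
  defining \<open>t\<^sub>m\<^sub>a\<^sub>x\<close>. Beyond finiteness, the argument only uses that \<open>G\<close> permutes the
  lines and the classes transitively.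
\<close>

lemma prod_atLeastAtMost_eq_falling:
  fixes n k :: nat
  assumes "k \<le> n"
  shows "\<Prod>{n - k + 1..n} = (\<Prod>j<k. n - j)"
proof -
  have "x \<in> (\<lambda>j. n - j) ` {..<k}" if "x \<in> {n - k + 1..n}" for x
    using that assms by (intro image_eqI[of _ _ "n - x"]) auto
  then have "{n - k + 1..n} = (\<lambda>j. n - j) ` {..<k}"
    using assms by auto
  moreover have "inj_on (\<lambda>j. n - j) {..<k}"
    using assms by (auto simp: inj_on_def)
  ultimately show ?thesis by (simp add: prod.reindex)
qed

lemma card_distinct_lists_subset:
  assumes "finite A"
  shows "card {xs. length xs = h \<and> distinct xs \<and> set xs \<subseteq> A} = (\<Prod>j<h. card A - j)"
proof (cases "h \<le> card A")
  case True
  then show ?thesis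
    using card_lists_distinct_length_eq[OF assms True] prod_atLeastAtMost_eq_falling[OF True]
    by simp
next
  case False
  then have "{xs. length xs = h \<and> distinct xs \<and> set xs \<subseteq> A} = {}"
    using assms by (auto dest: card_mono simp: distinct_card)
  moreover have "(\<Prod>j<h. card A - j) = 0"
    using False by (auto intro!: bexI[of _ "card A"])
  ultimately show ?thesis by (metis card.empty)
qed

lemma extend_distinct_list:
  assumes "finite A" "set xs \<subseteq> A" "distinct xs" "length xs \<le> n" "n \<le> card A"
  obtains zs where "set zs \<subseteq> A" "distinct zs" "length zs = n" "take (length xs) zs = xs"
proof -
  obtain ws where ws: "set ws = A - set xs" "distinct ws"
    using finite_distinct_list assms(1) by blast
  have "length ws = card A - length xs"
    using ws assms(2,3) by (metis card_Diff_subset distinct_card finite_set)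
  moreover have "set (take (n - length xs) ws) \<subseteq> A - set xs"
    using ws(1) set_take_subset by metis
  ultimately show ?thesis
    using that[of "xs @ take (n - length xs) ws"] ws(2) assms(2-5)
    by (auto simp: distinct_take)
qed

lemma induced_t_transitive_mono:
  assumes "induced_t_transitive G \<C> t" "h \<le> t"
  shows "induced_t_transitive G \<C> h"
proof (cases "finite \<C>")
  case False
  then have "h = t" using assms by (simp add: induced_t_transitive_def)
  then show ?thesis using assms(1) by simp
next
  case True
  have "t \<le> card \<C>" using assms(1) by (simp add: induced_t_transitive_def)
  have "\<exists>g\<in>G. map (\<lambda>C. g ` C) xs = ys"
    if xs: "set xs \<subseteq> \<C>" "distinct xs" "length xs = h"
      and ys: "set ys \<subseteq> \<C>" "distinct ys" "length ys = h"
    for xs ys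
  proof -
    obtain xs' where xs': "set xs' \<subseteq> \<C>" "distinct xs'" "length xs' = t" "take h xs' = xs"
      by (rule extend_distinct_list[OF True xs(1,2), of t])
        (use xs assms(2) \<open>t \<le> card \<C>\<close> in auto)
    obtain ys' where ys': "set ys' \<subseteq> \<C>" "distinct ys'" "length ys' = t" "take h ys' = ys"
      by (rule extend_distinct_list[OF True ys(1,2), of t])
        (use ys assms(2) \<open>t \<le> card \<C>\<close> in auto)
    obtain g where "g \<in> G" "map (\<lambda>C. g ` C) xs' = ys'"
      using assms(1) xs' ys' unfolding induced_t_transitive_def by blast
    then show ?thesis using xs'(4) ys'(4) by (metis take_map)
  qed
  then show ?thesis
    using assms \<open>t \<le> card \<C>\<close> by (simp add: induced_t_transitive_def)
qed

lemma perm_group_on_inj: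
  "perm_group_on P G \<Longrightarrow> g \<in> G \<Longrightarrow> inj g"
  unfolding perm_group_on_def using permutes_inj by blast

lemma G_invariant_image_eq:
  assumes "perm_group_on P G" "G_invariant G \<C>" "g \<in> G"
  shows "(\<lambda>C. g ` C) ` \<C> = \<C>"
proof
  show "(\<lambda>C. g ` C) ` \<C> \<subseteq> \<C>" using assms(2,3) by (auto simp: G_invariant_def)
  have "surj g" "inv g \<in> G"
    using assms(1,3) permutes_surj by (auto simp: perm_group_on_def)
  show "\<C> \<subseteq> (\<lambda>C. g ` C) ` \<C>"
  proof
    fix C assume "C \<in> \<C>"
    then have "inv g ` C \<in> \<C>" using \<open>inv g \<in> G\<close> assms(2) by (simp add: G_invariant_def)
    moreover have "C = g ` (inv g ` C)" using \<open>surj g\<close> by (simp add: image_comp surj_f_inv_f)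
    ultimately show "C \<in> (\<lambda>C. g ` C) ` \<C>" by blast
  qed
qed

definition classes_meeting :: "'a set set \<Rightarrow> nat set \<Rightarrow> 'a set \<Rightarrow> 'a set set" where
  "classes_meeting \<C> S m = {C \<in> \<C>. card (C \<inter> m) \<in> S}"

lemma classes_meeting_image:
  assumes "inj g" "(\<lambda>C. g ` C) ` \<C> = \<C>"
  shows "classes_meeting \<C> S (g ` m) = (\<lambda>C. g ` C) ` classes_meeting \<C> S m"
proof -
  have "card (g ` C \<inter> g ` m) = card (C \<inter> m)" for C
    using assms(1) by (simp add: image_Int[symmetric] card_image inj_on_subset)
  then have "(\<lambda>C. g ` C) ` classes_meeting \<C> S m
      = {C' \<in> (\<lambda>C. g ` C) ` \<C>. card (C' \<inter> g ` m) \<in> S}"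
    unfolding classes_meeting_def by auto
  then show ?thesis
    unfolding classes_meeting_def assms(2) by simp
qed

lemma inj_imp_inj_image:
  assumes "inj f"
  shows "inj (\<lambda>X. f ` X)"
  unfolding inj_def using inj_image_eq_iff[OF assms] by blast

lemma card_image_inj_image:
  "inj f \<Longrightarrow> card ((\<lambda>X. f ` X) ` \<X>) = card \<X>"
  by (rule card_image[OF inj_on_subset[OF inj_imp_inj_image subset_UNIV]])

lemma card_classes_meeting_image:
  assumes "inj g" "(\<lambda>C. g ` C) ` \<C> = \<C>"
  shows "card (classes_meeting \<C> S (g ` m)) = card (classes_meeting \<C> S m)"
  unfolding classes_meeting_image[OF assms] using assms(1) by (rule card_image_inj_image)

lemma card_lines_meeting_image:
  assumes "inj g" "(\<lambda>C. g ` C) ` \<C> = \<C>" "(\<lambda>m. g ` m) ` L = L"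
  shows "card {m \<in> L. set (map (\<lambda>C. g ` C) xs) \<subseteq> classes_meeting \<C> S m}
       = card {m \<in> L. set xs \<subseteq> classes_meeting \<C> S m}"
proof -
  have "set (map (\<lambda>C. g ` C) xs) \<subseteq> classes_meeting \<C> S (g ` m)
      \<longleftrightarrow> set xs \<subseteq> classes_meeting \<C> S m" for m
    unfolding classes_meeting_image[OF assms(1,2)] set_map
    using inj_image_subset_iff[OF inj_imp_inj_image[OF assms(1)]] .
  then have "{m \<in> (\<lambda>m. g ` m) ` L. set (map (\<lambda>C. g ` C) xs) \<subseteq> classes_meeting \<C> S m}
      = (\<lambda>m. g ` m) ` {m \<in> L. set xs \<subseteq> classes_meeting \<C> S m}"
    by blast
  then show ?thesis
    unfolding assms(3) by (simp only: card_image_inj_image[OF assms(1)])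
qed

lemma finite_spec:
  assumes "finite \<C>"
  shows "finite (spec \<C> l)"
proof -
  have "spec \<C> l \<subseteq> (\<lambda>C. card (C \<inter> l)) ` \<C>"
    unfolding spec_def dnum_def by (auto simp: card_eq_0_iff)
  then show ?thesis by (rule finite_surj[OF assms])
qed

lemma dS_eq_card_classes_meeting:
  assumes "finite \<C>" "finite S"
  shows "dS \<C> l S = card (classes_meeting \<C> S l)"
proof -
  have "dS \<C> l S = card (\<Union>i\<in>S. {C \<in> \<C>. card (C \<inter> l) = i})"
    unfolding dS_def dnum_def using assms by (subst card_UN_disjoint) auto
  also have "(\<Union>i\<in>S. {C \<in> \<C>. card (C \<inter> l) = i}) = classes_meeting \<C> S l"
    unfolding classes_meeting_def by auto
  finally show ?thesis .
qed

lemma card_lines_meeting_const: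
  assumes inj: "\<forall>g\<in>G. inj g"
    and classes: "\<forall>g\<in>G. (\<lambda>C. g ` C) ` \<C> = \<C>"
    and lines: "\<forall>g\<in>G. (\<lambda>m. g ` m) ` L = L"
    and "induced_t_transitive G \<C> h"
  obtains N where "\<forall>xs \<in> {xs. length xs = h \<and> distinct xs \<and> set xs \<subseteq> \<C>}.
    card {m \<in> L. set xs \<subseteq> classes_meeting \<C> S m} = N"
proof (cases "{xs. length xs = h \<and> distinct xs \<and> set xs \<subseteq> \<C>} = {}")
  case False
  then obtain xs\<^sub>0 where xs\<^sub>0: "length xs\<^sub>0 = h" "distinct xs\<^sub>0" "set xs\<^sub>0 \<subseteq> \<C>" by blast
  have "card {m \<in> L. set xs \<subseteq> classes_meeting \<C> S m}
      = card {m \<in> L. set xs\<^sub>0 \<subseteq> classes_meeting \<C> S m}"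
    if xs: "length xs = h" "distinct xs" "set xs \<subseteq> \<C>" for xs
  proof -
    obtain g where g: "g \<in> G" "map (\<lambda>C. g ` C) xs\<^sub>0 = xs"
      using conjunct2[OF \<open>induced_t_transitive G \<C> h\<close>[unfolded induced_t_transitive_def],
          rule_format, of xs\<^sub>0 xs] xs\<^sub>0 xs by blast
    show ?thesis
      unfolding g(2)[symmetric]
      by (rule card_lines_meeting_image)
        (use inj classes lines g(1) in \<open>simp_all\<close>)
  qed
  then show ?thesis
    by (intro that[of "card {m \<in> L. set xs\<^sub>0 \<subseteq> classes_meeting \<C> S m}"]) simp
qed (use that in blast)

lemma falling_factorial_classes_dvd:
  assumes "finite \<C>" "finite L"
    and inj: "\<forall>g\<in>G. inj g"
    and classes: "\<forall>g\<in>G. (\<lambda>C. g ` C) ` \<C> = \<C>"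
    and lines: "\<forall>g\<in>G. (\<lambda>m. g ` m) ` L = L"
    and "line_transitive L G" "induced_t_transitive G \<C> h" "l \<in> L"
  shows "(\<Prod>j<h. card \<C> - j) dvd card L * (\<Prod>j<h. card (classes_meeting \<C> S l) - j)"
proof -
  define T where "T = {xs. length xs = h \<and> distinct xs \<and> set xs \<subseteq> \<C>}"
  define e where "e = card (classes_meeting \<C> S l)"
  have "finite T"
    unfolding T_def using finite_lists_length_eq[OF \<open>finite \<C>\<close>, of h]
    by (rule rev_finite_subset) auto
  have per_line: "card {xs \<in> T. set xs \<subseteq> classes_meeting \<C> S m} = (\<Prod>j<h. e - j)"
    if "m \<in> L" for m
  proof -
    obtain g where g: "g \<in> G" "g ` l = m"
      using \<open>line_transitive L G\<close> \<open>l \<in> L\<close> \<open>m \<in> L\<close> unfolding line_transitive_def by blast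
    have "{xs \<in> T. set xs \<subseteq> classes_meeting \<C> S m}
        = {xs. length xs = h \<and> distinct xs \<and> set xs \<subseteq> classes_meeting \<C> S m}"
      unfolding T_def classes_meeting_def by auto
    also have "card \<dots> = (\<Prod>j<h. card (classes_meeting \<C> S m) - j)"
      using \<open>finite \<C>\<close> by (intro card_distinct_lists_subset) (simp add: classes_meeting_def)
    also have "card (classes_meeting \<C> S m) = e"
      unfolding e_def g(2)[symmetric] using g(1) inj classes by (simp add: card_classes_meeting_image)
    finally show ?thesis .
  qed
  obtain N where "\<forall>xs\<in>T. card {m \<in> L. set xs \<subseteq> classes_meeting \<C> S m} = N"
    using card_lines_meeting_const[OF inj classes lines assms(7)] unfolding T_def by blast
  then have "(\<Sum>m\<in>L. card {xs \<in> T. set xs \<subseteq> classes_meeting \<C> S m}) = N * card T"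
    using \<open>finite T\<close> \<open>finite L\<close> by (intro sum_multicount) auto
  moreover have "(\<Sum>m\<in>L. card {xs \<in> T. set xs \<subseteq> classes_meeting \<C> S m}) = card L * (\<Prod>j<h. e - j)"
    using per_line by simp
  moreover have "card T = (\<Prod>j<h. card \<C> - j)"
    unfolding T_def using \<open>finite \<C>\<close> by (rule card_distinct_lists_subset)
  ultimately show ?thesis
    unfolding e_def by (metis dvd_triv_right)
qed


lemma le_tmaxI:
  assumes "0 < t" "t \<le> d"
    and "\<And>S h. S \<subseteq> spec \<C> l \<Longrightarrow> S \<noteq> {} \<Longrightarrow> 0 < h \<Longrightarrow> h \<le> t \<Longrightarrow> h \<le> dS \<C> l S \<Longrightarrow>
      (\<Prod>j<h. d - j) dvd b * (\<Prod>j<h. dS \<C> l S - j)"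
  shows "t \<le> tmax \<C> l d b"
  unfolding tmax_def
proof (rule Greatest_le_nat[where b = d], intro conjI allI impI)
  fix S h
  assume "S \<subseteq> spec \<C> l \<and> S \<noteq> {}" "0 < h \<and> h \<le> min t (dS \<C> l S)"
  then show "(\<Prod>j<h. d - j) dvd b * (\<Prod>j<h. dS \<C> l S - j)" using assms(3) by simp
qed (use assms(1,2) in simp_all)


theorem lemma4p7:
  fixes P :: "'a set" and L :: "'a set set" and G :: "('a \<Rightarrow> 'a) set"
    and \<C> :: "'a set set" and v k b c d t :: nat and l :: "'a set"
  assumes "linear_space P L"
    and "card P = v" and "\<forall>m\<in>L. card m = k" and "2 < k" and "k < v"
    and "card L = b"
    and "aut_group P L G" and "line_transitive L G"
    and "partition_of P \<C>" and "G_invariant G \<C>"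
    and "card \<C> = d" and "\<forall>C\<in>\<C>. card C = c" and "1 < d" and "1 < c"
    and "induced_t_transitive G \<C> t"
    and "l \<in> L"
  shows "t \<le> tmax \<C> l d b"
proof (cases "t = 0")
  case False
  have "L \<subseteq> Pow P" "finite P"
    using \<open>linear_space P L\<close> by (auto simp: linear_space_def)
  then have "finite L" by (meson finite_Pow_iff finite_subset)
  have "finite \<C>" using \<open>card \<C> = d\<close> \<open>1 < d\<close> card.infinite by fastforce
  have "perm_group_on P G" and lines: "\<forall>g\<in>G. (\<lambda>m. g ` m) ` L = L"
    using \<open>aut_group P L G\<close> by (simp_all add: aut_group_def)
  have inj: "\<forall>g\<in>G. inj g"
    using perm_group_on_inj[OF \<open>perm_group_on P G\<close>] by blast
  have classes: "\<forall>g\<in>G. (\<lambda>C. g ` C) ` \<C> = \<C>"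
    using G_invariant_image_eq[OF \<open>perm_group_on P G\<close> \<open>G_invariant G \<C>\<close>] by blast
  show ?thesis
  proof (rule le_tmaxI)
    show "0 < t" "t \<le> d" using False assms(11,15) by (simp_all add: induced_t_transitive_def)
    fix S h
    assume "S \<subseteq> spec \<C> l" "h \<le> t"
    from \<open>S \<subseteq> spec \<C> l\<close> have "finite S" by (rule finite_subset[OF _ finite_spec[OF \<open>finite \<C>\<close>]])
    then show "(\<Prod>j<h. d - j) dvd b * (\<Prod>j<h. dS \<C> l S - j)"
      using falling_factorial_classes_dvd[OF \<open>finite \<C>\<close> \<open>finite L\<close> inj classes lines
          \<open>line_transitive L G\<close> induced_t_transitive_mono[OF assms(15) \<open>h \<le> t\<close>] \<open>l \<in> L\<close>]
        dS_eq_card_classes_meeting[OF \<open>finite \<C>\<close>] assms(6,11) by simp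
  qed
qed simp

end
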